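(* Let $D=(V,A)$ be a digraph with weight $w\in\{0,1\}^A$ such that $D$ has a dicut and the minimum weight of a dicut is $\tau\ge2$. Let $e\in A$ with $w_e=1$. If there exists $\emptyset\neq U\subsetneq V$ with $\delta^+_D(U)=\{e\}$ and $w(\delta^-_D(U))=0$, then $e$ is not contained in any dicut of weight exactly $\tau$.
   Context: Digraphs are finite and loopless; parallel arcs allowed. $\delta^+_D(U)$ / $\delta^-_D(U)$ denote arcs leaving/entering $U$. A dicut is an arc set of the form $\delta^-_D(W)$ with $\emptyset\neq W\subsetneq V$ and $\delta^+_D(W)=\emptyset$ (equivalently $\delta^+_D(V\setminus W)$ with no arc entering $V\setminus W$). For an arc set $B$, $w(B)=\sum_{e\in B}w_e$. *)

theory Defs
  imports Main
begin

definition digraph :: "'v set \<Rightarrow> 'e set \<Rightarrow> ('e \<Rightarrow> 'v) \<Rightarrow> ('e \<Rightarrow> 'v) \<Rightarrow> bool" where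
  "digraph V A tail head \<longleftrightarrow> finite V \<and> finite A \<and>
     (\<forall>a\<in>A. tail a \<in> V \<and> head a \<in> V \<and> tail a \<noteq> head a)"

definition out_arcs :: "'e set \<Rightarrow> ('e \<Rightarrow> 'v) \<Rightarrow> ('e \<Rightarrow> 'v) \<Rightarrow> 'v set \<Rightarrow> 'e set" where
  "out_arcs A tail head U = {a\<in>A. tail a \<in> U \<and> head a \<notin> U}"

definition in_arcs :: "'e set \<Rightarrow> ('e \<Rightarrow> 'v) \<Rightarrow> ('e \<Rightarrow> 'v) \<Rightarrow> 'v set \<Rightarrow> 'e set" where
  "in_arcs A tail head U = {a\<in>A. head a \<in> U \<and> tail a \<notin> U}"

definition is_dicut :: "'v set \<Rightarrow> 'e set \<Rightarrow> ('e \<Rightarrow> 'v) \<Rightarrow> ('e \<Rightarrow> 'v) \<Rightarrow> 'e set \<Rightarrow> bool" where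
  "is_dicut V A tail head B \<longleftrightarrow>
     (\<exists>W. W \<noteq> {} \<and> W \<subset> V \<and> out_arcs A tail head W = {} \<and> B = in_arcs A tail head W)"

definition wt :: "('e \<Rightarrow> nat) \<Rightarrow> 'e set \<Rightarrow> nat" where
  "wt w B = (\<Sum>e\<in>B. w e)"

end

theory Submission
  imports Defs
begin

text \<open>Uncrossing. Let \<open>W\<close> be a dicut shore with \<open>e \<in> \<delta>\<^sup>-(W)\<close> and weight \<open>\<tau>\<close>, and let
  \<open>\<delta>\<^sup>+(U) = {e}\<close> with \<open>w(\<delta>\<^sup>-(U)) = 0\<close>. Since \<open>e\<close> runs from \<open>U - W\<close> to \<open>W - U\<close>, both \<open>W \<union> U\<close> and
  \<open>W \<inter> U\<close> have no leaving arc, and their entering arcs lie in \<open>(\<delta>\<^sup>-(W) - {e}) \<union> \<delta>\<^sup>-(U)\<close>, of weight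
  \<open>\<tau> - 1\<close>. So neither can be a proper nonempty shore, which forces \<open>U = V - W\<close>; but then
  \<open>\<delta>\<^sup>-(W) = \<delta>\<^sup>+(U) = {e}\<close> has weight \<open>1 < \<tau>\<close>.\<close>

lemma out_arcs_Un_Int_subset:
  assumes "X \<in> {W \<union> U, W \<inter> U}"
  shows "out_arcs A tail head X \<subseteq> out_arcs A tail head W \<union> out_arcs A tail head U"
  using assms unfolding out_arcs_def by auto

lemma in_arcs_Un_Int_subset:
  assumes "X \<in> {W \<union> U, W \<inter> U}"
  shows "in_arcs A tail head X \<subseteq> in_arcs A tail head W \<union> in_arcs A tail head U"
  using assms unfolding in_arcs_def by auto

lemma crossing_arc_notin_Un_Int:
  assumes "X \<in> {W \<union> U, W \<inter> U}" and "tail e \<in> U - W" and "head e \<in> W - U"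
  shows "e \<notin> out_arcs A tail head X" and "e \<notin> in_arcs A tail head X"
  using assms unfolding out_arcs_def in_arcs_def by auto

lemma in_arcs_eq_out_arcs_Diff:
  assumes "digraph V A tail head"
  shows "in_arcs A tail head W = out_arcs A tail head (V - W)"
  using assms unfolding digraph_def in_arcs_def out_arcs_def by auto

lemma uncross_dicut:
  assumes "out_arcs A tail head W = {}" and "out_arcs A tail head U = {e}"
    and "e \<in> in_arcs A tail head W" and "X \<in> {W \<union> U, W \<inter> U}"
  shows "out_arcs A tail head X = {}"
    and "in_arcs A tail head X \<subseteq> (in_arcs A tail head W - {e}) \<union> in_arcs A tail head U"
proof -
  have crossing: "tail e \<in> U - W" "head e \<in> W - U"
    using assms(2,3) unfolding out_arcs_def in_arcs_def by auto
  note notin =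
    crossing_arc_notin_Un_Int[where A = A and tail = tail and head = head and e = e, OF assms(4) crossing]
  show "out_arcs A tail head X = {}"
    using out_arcs_Un_Int_subset[where A = A and tail = tail and head = head, OF assms(4)]
      notin(1) assms(1,2) by auto
  show "in_arcs A tail head X \<subseteq> (in_arcs A tail head W - {e}) \<union> in_arcs A tail head U"
    using in_arcs_Un_Int_subset[where A = A and tail = tail and head = head, OF assms(4)]
      notin(2) by auto
qed

lemma Min_dicut_weight_le:
  assumes "digraph V A tail head" and "is_dicut V A tail head C"
  shows "Min {wt w B | B. is_dicut V A tail head B} \<le> wt w C"
proof (rule Min_le)
  have "{wt w B | B. is_dicut V A tail head B} \<subseteq> wt w ` Pow A"
    unfolding is_dicut_def in_arcs_def by auto
  then show "finite {wt w B | B. is_dicut V A tail head B}"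
    using assms(1) finite_subset unfolding digraph_def by blast
qed (use assms(2) in blast)

lemma wt_le_of_subset_Un:
  assumes "finite B" and "finite C" and "D \<subseteq> B \<union> C"
  shows "wt w D \<le> wt w B + wt w C"
proof -
  have "wt w D \<le> wt w (B \<union> C)"
    unfolding wt_def using assms by (intro sum_mono2) auto
  also have "\<dots> \<le> wt w B + wt w C"
    unfolding wt_def using assms(1,2) by (simp add: sum_Un_nat)
  finally show ?thesis .
qed

theorem lemma2:
  fixes V :: "'v set" and A :: "'e set" and tail head :: "'e \<Rightarrow> 'v"
    and w :: "'e \<Rightarrow> nat" and \<tau> :: nat and e :: 'e
  assumes "digraph V A tail head"
    and "\<forall>a\<in>A. w a \<in> {0, 1}"
    and "\<exists>B. is_dicut V A tail head B"
    and "\<tau> = Min {wt w B | B. is_dicut V A tail head B}"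
    and "\<tau> \<ge> 2"
    and "e \<in> A" and "w e = 1"
    and "\<exists>U. U \<noteq> {} \<and> U \<subset> V \<and> out_arcs A tail head U = {e} \<and> wt w (in_arcs A tail head U) = 0"
  shows "\<not> (\<exists>B. is_dicut V A tail head B \<and> e \<in> B \<and> wt w B = \<tau>)"
proof
  assume "\<exists>B. is_dicut V A tail head B \<and> e \<in> B \<and> wt w B = \<tau>"
  then obtain W where W: "W \<noteq> {}" "W \<subset> V" "out_arcs A tail head W = {}"
    and eW: "e \<in> in_arcs A tail head W" and wW: "wt w (in_arcs A tail head W) = \<tau>"
    unfolding is_dicut_def by blast
  obtain U where U: "U \<subset> V" "out_arcs A tail head U = {e}"
    and wU: "wt w (in_arcs A tail head U) = 0" using assms(8) by blast
  have fin: "finite (in_arcs A tail head X)" for X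
    using assms(1) unfolding digraph_def in_arcs_def by auto
  have wW_minus_e: "wt w (in_arcs A tail head W - {e}) = \<tau> - 1"
    using wW eW assms(7) fin unfolding wt_def by (simp add: sum_diff1_nat)
  have light: "wt w (in_arcs A tail head X) < \<tau>" if "X \<in> {W \<union> U, W \<inter> U}" for X
  proof -
    have "wt w (in_arcs A tail head X)
        \<le> wt w (in_arcs A tail head W - {e}) + wt w (in_arcs A tail head U)"
      using fin uncross_dicut(2)[OF W(3) U(2) eW that] by (intro wt_le_of_subset_Un) simp_all
    then show ?thesis
      using wW_minus_e wU assms(5) by linarith
  qed
  have not_shore: "\<not> (X \<noteq> {} \<and> X \<subset> V)" if "X \<in> {W \<union> U, W \<inter> U}" for X
  proof
    assume "X \<noteq> {} \<and> X \<subset> V"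
    then have "is_dicut V A tail head (in_arcs A tail head X)"
      using uncross_dicut(1)[OF W(3) U(2) eW that] unfolding is_dicut_def by blast
    then show False
      using Min_dicut_weight_le[OF assms(1), of _ w] light[OF that] assms(4) by fastforce
  qed
  have "W \<union> U = V"
    using not_shore[of "W \<union> U"] W(1,2) U(1) by auto
  moreover have "W \<inter> U = {}"
    using not_shore[of "W \<inter> U"] W(2) by auto
  ultimately have "U = V - W"
    by auto
  then have "in_arcs A tail head W = {e}"
    using in_arcs_eq_out_arcs_Diff[OF assms(1)] U(2) by simp
  then show False
    using wW assms(5,7) by (simp add: wt_def)
qed

end
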